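(* Assume the setting described in the context. Let $\mathbf p\in\mathcal C^*$ and let $\mathbf K\in\mathbb N^t$ be its preferred factorization with respect to the factoring order $(\pi_1,\dots,\pi_t)$. Then $\mathbf K$ is the lexicographically largest element of the set $\{\mathbf K'\in\mathbb N^t: K'_1\pi_1+\cdots+K'_t\pi_t=\mathbf p\}$ of all factorizations of $\mathbf p$ into admissible primes.
   Context: $\mathbb N=\{0,1,2,\dots\}$. For a real $n\times n$ matrix $A$ and $f\in\mathbb R[[\mathbf x]]$ put $\mathcal D_Af(\mathbf x)=f'(\mathbf x)A\mathbf x$. Let $(\acute X,\acute Y,\acute Z)$ and $(\grave X,\grave Y,\grave Z)$ be $\mathfrak{sl}_2$ triads (i.e. $[X,Y]=Z,[Z,X]=2X,[Z,Y]=-2Y$) of real $n\times n$ resp. $m\times m$ matrices; set $\acute{\mathcal X}=\mathcal D_{\acute Y}$, $\acute{\mathcal Z}=\mathcal D_{\acute Z}$ on $\mathbb R[[\mathbf x]]$ and $\grave{\mathcal X}=\mathcal D_{\grave Y}$, $\grave{\mathcal Z}=\mathcal D_{\grave Z}$ on $\mathbb R[[\mathbf y]]$; $\acute{\mathcal J}=\ker\acute{\mathcal X}$, $\grave{\mathcal J}=\ker\grave{\mathcal X}$. A weight invariant is an element $f$ of $\acute{\mathcal J}$ (resp. $\grave{\mathcal J}$) with $\acute{\mathcal Z}f=\widehat ff$ (resp. $\grave{\mathcal Z}f=\widehat ff$). Let $\alpha=(\alpha_1,\dots,\alpha_p)$ be a Hilbert basis of $\acute{\mathcal J}$ (homogeneous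 weight invariants, weights $\widehat\alpha_i$, whose monomials $\alpha^{\mathbf k}$ span $\acute{\mathcal J}$ by countable linear combinations) and $\beta=(\beta_1,\dots,\beta_q)$ one of $\grave{\mathcal J}$ (weights $\widehat\beta_j$); $\widehat\alpha\mathbf k=\sum\widehat\alpha_ik_i$, $\widehat\beta\boldsymbol\ell=\sum\widehat\beta_j\ell_j$. Let $\acute A\subset\mathbb N^p$, $\grave A\subset\mathbb N^q$ be standard preferred sets: the monomials $\alpha^{\mathbf k}$, $\mathbf k\in\acute A$, are pairwise distinct, linearly independent and span $\acute{\mathcal J}$ by countable linear combinations, and $\acute A$ is closed under passing to componentwise smaller vectors in $\mathbb N^p$; likewise for $\grave A$. Transvectant cone $\mathcal C=\{(\mathbf k;\boldsymbol\ell;s)\in\mathbb N^{p+q+1}:s\le\widehat\alpha\mathbf k,\ s\le\widehat\beta\boldsymbol\ell\}$; $\mathcal C^*=\{(\mathbf k;\boldsymbol\ell;s)\in\mathcal C:\mathbf k\in\acute A,\boldsymbol\ell\in\grave A\}$. A prime is a nonzero element of $\mathcal C$ not a sum of two nonzero elements of $\mathcal C$; $\Pi^*=\{\pi_1,\dots,\pi_t\}$ is the set of primes lying in $\mathcal C^*$, listed in a fixed order (the factoring order). The preferred factorization of $\mathbf p\in\mathcal C^*$ is the vector $\mathbf K\in\mathbb N^t$ obtained greedily: $K_1=\max\{j\in\mathbb N:\mathbf p-j\pi_1\in\mathcal C\}$, and for $i=2,\dots,t$, $K_i=\max\{j:\mathbf p-K_1\pi_1-\cdots-K_{i-1}\pi_{i-1}-j\pi_i\in\mathcal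 C\}$ (one has $\sum K_i\pi_i=\mathbf p$). Lexicographic order on $\mathbb N^t$ compares the first differing entry. *)

theory Defs
  imports Main
begin

text \<open>Elements of \<open>\<nat>^(p+q+1)\<close> are represented as triples \<open>(k, l, s)\<close> where
  \<open>k\<close> and \<open>l\<close> are functions \<open>nat \<Rightarrow> nat\<close> (supported on \<open>{..<p}\<close> resp. \<open>{..<q}\<close>)
  and \<open>s\<close> is a natural number.\<close>

type_synonym cvec = "(nat \<Rightarrow> nat) \<times> (nat \<Rightarrow> nat) \<times> nat"

definition czero :: cvec where
  "czero = (\<lambda>_. 0, \<lambda>_. 0, 0)"

definition cadd :: "cvec \<Rightarrow> cvec \<Rightarrow> cvec" where
  "cadd a b = (\<lambda>i. fst a i + fst b i, \<lambda>j. fst (snd a) j + fst (snd b) j,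
               snd (snd a) + snd (snd b))"

definition csmul :: "nat \<Rightarrow> cvec \<Rightarrow> cvec" where
  "csmul c a = (\<lambda>i. c * fst a i, \<lambda>j. c * fst (snd a) j, c * snd (snd a))"

text \<open>Componentwise truncated subtraction (only used when the result is exact).\<close>
definition csub :: "cvec \<Rightarrow> cvec \<Rightarrow> cvec" where
  "csub a b = (\<lambda>i. fst a i - fst b i, \<lambda>j. fst (snd a) j - fst (snd b) j,
               snd (snd a) - snd (snd b))"

definition wdeg :: "nat \<Rightarrow> (nat \<Rightarrow> nat) \<Rightarrow> (nat \<Rightarrow> nat) \<Rightarrow> nat" where
  "wdeg n w k = (\<Sum>i<n. w i * k i)"

definition tcone :: "nat \<Rightarrow> nat \<Rightarrow> (nat \<Rightarrow> nat) \<Rightarrow> (nat \<Rightarrow> nat) \<Rightarrow> cvec set" where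
  "tcone p q wa wb = {(k, l, s). (\<forall>i\<ge>p. k i = 0) \<and> (\<forall>j\<ge>q. l j = 0) \<and>
                                 s \<le> wdeg p wa k \<and> s \<le> wdeg q wb l}"

definition tcone_star :: "nat \<Rightarrow> nat \<Rightarrow> (nat \<Rightarrow> nat) \<Rightarrow> (nat \<Rightarrow> nat) \<Rightarrow>
    (nat \<Rightarrow> nat) set \<Rightarrow> (nat \<Rightarrow> nat) set \<Rightarrow> cvec set" where
  "tcone_star p q wa wb Aa Ab = {x \<in> tcone p q wa wb. fst x \<in> Aa \<and> fst (snd x) \<in> Ab}"

definition is_prime_in :: "cvec set \<Rightarrow> cvec \<Rightarrow> bool" where
  "is_prime_in C x \<longleftrightarrow> x \<in> C \<and> x \<noteq> czero \<and>
     \<not> (\<exists>a\<in>C. \<exists>b\<in>C. a \<noteq> czero \<and> b \<noteq> czero \<and> x = cadd a b)"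

text \<open>Downward closed subset of \<open>\<nat>^n\<close> (the order property of a standard preferred set).\<close>
definition down_closed_in :: "nat \<Rightarrow> (nat \<Rightarrow> nat) set \<Rightarrow> bool" where
  "down_closed_in n A \<longleftrightarrow> (\<forall>k\<in>A. \<forall>i\<ge>n. k i = 0) \<and>
     (\<forall>k\<in>A. \<forall>k'. (\<forall>i. k' i \<le> k i) \<longrightarrow> k' \<in> A)"

fun pref_fact :: "cvec set \<Rightarrow> cvec list \<Rightarrow> cvec \<Rightarrow> nat list" where
  "pref_fact C [] x = []"
| "pref_fact C (\<pi> # \<pi>s) x =
     (let j = (GREATEST j. \<exists>r\<in>C. x = cadd r (csmul j \<pi>))
      in j # pref_fact C \<pi>s (csub x (csmul j \<pi>)))"

fun lincomb :: "nat list \<Rightarrow> cvec list \<Rightarrow> cvec" where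
  "lincomb (k # ks) (\<pi> # \<pi>s) = cadd (csmul k \<pi>) (lincomb ks \<pi>s)"
| "lincomb _ _ = czero"

definition factorizations :: "cvec list \<Rightarrow> cvec \<Rightarrow> nat list set" where
  "factorizations \<pi>s x = {K. length K = length \<pi>s \<and> lincomb K \<pi>s = x}"

definition lex_le :: "nat list \<Rightarrow> nat list \<Rightarrow> bool" where
  "lex_le K' K \<longleftrightarrow> K' = K \<or>
     (\<exists>i < length K. take i K' = take i K \<and> K' ! i < K ! i)"

end

theory Submission
  imports Defs
begin

text \<open>The greedy choice is well defined because a multiple of a nonzero cone element can only be
  split off finitely often: the total size of the coordinates bounds the multiplicity. The greedy
  factorization dominates every factorization lexicographically, since its first entry is the
  largest multiplicity with which \<open>\<pi>\<^sub>1\<close> can be split off at all, and on ties the remainders agree.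
  It is a factorization because, once all admissible primes have been split off maximally, the
  remainder is divisible by no admissible prime; but every nonzero cone element has a prime summand,
  and by downward closedness of the preferred sets that summand is admissible, so the remainder
  vanishes.\<close>

definition csize :: "nat \<Rightarrow> nat \<Rightarrow> cvec \<Rightarrow> nat" where
  "csize p q x = (\<Sum>i<p. fst x i) + (\<Sum>j<q. fst (snd x) j) + snd (snd x)"

lemma csize_cadd: "csize p q (cadd a b) = csize p q a + csize p q b"
  by (simp add: csize_def cadd_def sum.distrib)

lemma csize_csmul: "csize p q (csmul j a) = j * csize p q a"
  by (simp add: csize_def csmul_def sum_distrib_left algebra_simps)

lemma csize_eq_0_iff:
  assumes "x \<in> tcone p q wa wb"
  shows "csize p q x = 0 \<longleftrightarrow> x = czero"
proof
  obtain k l s where x: "x = (k, l, s)" by (cases x) auto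
  assume "csize p q x = 0"
  then have "\<forall>i<p. k i = 0" "\<forall>j<q. l j = 0" "s = 0" by (auto simp: csize_def x)
  moreover have "\<forall>i\<ge>p. k i = 0" "\<forall>j\<ge>q. l j = 0" using assms by (auto simp: tcone_def x)
  ultimately have "k = (\<lambda>_. 0)" "l = (\<lambda>_. 0)" by (metis not_le)+
  with \<open>s = 0\<close> show "x = czero" by (simp add: x czero_def)
qed (simp add: csize_def czero_def)

lemma cadd_commute: "cadd a b = cadd b a"
  by (simp add: cadd_def add.commute)

lemma czero_cadd: "cadd czero a = a"
  by (simp add: cadd_def czero_def)

lemma cadd_right_commute: "cadd (cadd a b) c = cadd (cadd a c) b"
  by (simp add: cadd_def ac_simps)

lemma csub_cadd: "csub (cadd r a) a = r"
  by (simp add: csub_def cadd_def)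

lemma cadd_csmul_Suc: "cadd (cadd r a) (csmul j a) = cadd r (csmul (Suc j) a)"
  by (simp add: cadd_def csmul_def algebra_simps)

lemma wdeg_add: "wdeg n w (\<lambda>i. k i + k' i) = wdeg n w k + wdeg n w k'"
  by (simp add: wdeg_def sum.distrib algebra_simps)

lemma wdeg_smul: "wdeg n w (\<lambda>i. j * k i) = j * wdeg n w k"
  by (simp add: wdeg_def sum_distrib_left algebra_simps)

lemma czero_in_tcone: "czero \<in> tcone p q wa wb"
  by (simp add: czero_def tcone_def wdeg_def)

lemma cadd_in_tcone:
  "a \<in> tcone p q wa wb \<Longrightarrow> b \<in> tcone p q wa wb \<Longrightarrow> cadd a b \<in> tcone p q wa wb"
  by (auto simp: tcone_def cadd_def wdeg_add)

lemma csmul_in_tcone: "a \<in> tcone p q wa wb \<Longrightarrow> csmul j a \<in> tcone p q wa wb"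
  by (auto simp: tcone_def csmul_def wdeg_smul)

lemma lincomb_in_tcone:
  "set \<pi>s \<subseteq> tcone p q wa wb \<Longrightarrow> lincomb K \<pi>s \<in> tcone p q wa wb"
  by (induction K \<pi>s rule: lincomb.induct) (auto simp: czero_in_tcone cadd_in_tcone csmul_in_tcone)

lemma tcone_prime_summand:
  assumes "x \<in> tcone p q wa wb" "x \<noteq> czero"
  shows "\<exists>\<pi> r. is_prime_in (tcone p q wa wb) \<pi> \<and> r \<in> tcone p q wa wb \<and> x = cadd r \<pi>"
  using assms
proof (induction "csize p q x" arbitrary: x rule: less_induct)
  case less
  show ?case
  proof (cases "is_prime_in (tcone p q wa wb) x")
    case True
    then show ?thesis using czero_in_tcone czero_cadd by metis
  next
    case False
    then obtain a b where ab: "a \<in> tcone p q wa wb" "b \<in> tcone p q wa wb"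
      "a \<noteq> czero" "b \<noteq> czero" "x = cadd a b"
      using less.prems by (auto simp: is_prime_in_def)
    then have "csize p q a < csize p q x"
      using csize_eq_0_iff[of b] by (simp add: csize_cadd)
    then obtain \<pi> r where "is_prime_in (tcone p q wa wb) \<pi>" "r \<in> tcone p q wa wb" "a = cadd r \<pi>"
      using less.hyps ab by blast
    moreover have "x = cadd (cadd r b) \<pi>"
      using ab(5) \<open>a = cadd r \<pi>\<close> cadd_right_commute by simp
    ultimately show ?thesis using ab(2) cadd_in_tcone by blast
  qed
qed

lemma down_closed_cadd_left:
  assumes "down_closed_in n A" "(\<lambda>i. k i + k' i) \<in> A"
  shows "k \<in> A"
  using assms unfolding down_closed_in_def by auto

lemma tcone_star_cadd_left:
  assumes "down_closed_in p Aa" "down_closed_in q Ab"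
    and "cadd r a \<in> tcone_star p q wa wb Aa Ab" "r \<in> tcone p q wa wb"
  shows "r \<in> tcone_star p q wa wb Aa Ab"
  using assms down_closed_cadd_left[OF assms(1)] down_closed_cadd_left[OF assms(2)]
  by (auto simp: tcone_star_def cadd_def)

lemma tcone_star_prime_summand:
  assumes "down_closed_in p Aa" "down_closed_in q Ab"
    and "x \<in> tcone_star p q wa wb Aa Ab" "x \<noteq> czero"
  obtains \<pi> r where "\<pi> \<in> tcone_star p q wa wb Aa Ab" "is_prime_in (tcone p q wa wb) \<pi>"
    "r \<in> tcone p q wa wb" "x = cadd r \<pi>"
proof -
  obtain \<pi> r where \<pi>: "is_prime_in (tcone p q wa wb) \<pi>" "r \<in> tcone p q wa wb" "x = cadd r \<pi>"
    using tcone_prime_summand assms(3,4) unfolding tcone_star_def by blast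
  then have "\<pi> \<in> tcone_star p q wa wb Aa Ab"
    using tcone_star_cadd_left[OF assms(1,2), of \<pi> r] assms(3) cadd_commute
    by (metis is_prime_in_def)
  with \<pi> show ?thesis using that by blast
qed

definition cdvd :: "cvec set \<Rightarrow> cvec \<Rightarrow> cvec \<Rightarrow> bool" where
  "cdvd C a x \<longleftrightarrow> (\<exists>r\<in>C. x = cadd r a)"

definition greedy_mult :: "cvec set \<Rightarrow> cvec \<Rightarrow> cvec \<Rightarrow> nat" where
  "greedy_mult C \<pi> x = (GREATEST j. cdvd C (csmul j \<pi>) x)"

lemma pref_fact_Cons:
  "pref_fact C (\<pi> # \<pi>s) x =
     greedy_mult C \<pi> x # pref_fact C \<pi>s (csub x (csmul (greedy_mult C \<pi> x) \<pi>))"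
  by (simp add: greedy_mult_def cdvd_def Let_def)

lemma cdvd_csmul_le_csize:
  assumes "\<pi> \<in> tcone p q wa wb" "\<pi> \<noteq> czero" "cdvd (tcone p q wa wb) (csmul j \<pi>) x"
  shows "j \<le> csize p q x"
proof -
  obtain r where x: "x = cadd r (csmul j \<pi>)" using assms(3) by (auto simp: cdvd_def)
  have "csize p q \<pi> \<ge> 1" using assms(1,2) csize_eq_0_iff by fastforce
  then have "j \<le> j * csize p q \<pi>" by simp
  also have "\<dots> \<le> csize p q x" by (simp add: x csize_cadd csize_csmul)
  finally show ?thesis .
qed

lemma
  assumes "\<pi> \<in> tcone p q wa wb" "\<pi> \<noteq> czero" "cdvd (tcone p q wa wb) (csmul j \<pi>) x"
  shows cdvd_greedy_mult: "cdvd (tcone p q wa wb) (csmul (greedy_mult (tcone p q wa wb) \<pi> x) \<pi>) x"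
    and le_greedy_mult: "j \<le> greedy_mult (tcone p q wa wb) \<pi> x"
  unfolding greedy_mult_def
  using GreatestI_nat[where P = "\<lambda>j. cdvd _ (csmul j \<pi>) x", OF assms(3)]
    Greatest_le_nat[where P = "\<lambda>j. cdvd _ (csmul j \<pi>) x", OF assms(3)]
    cdvd_csmul_le_csize[OF assms(1,2)]
  by blast+

lemma cdvd_csmul_0: "x \<in> C \<Longrightarrow> cdvd C (csmul 0 \<pi>) x"
  unfolding cdvd_def by (rule bexI[of _ x]) (simp_all add: cadd_def csmul_def)

lemma lex_le_Cons_same: "lex_le xs ys \<Longrightarrow> lex_le (a # xs) (a # ys)"
  unfolding lex_le_def
proof (elim disjE exE)
  fix i assume "i < length ys \<and> take i xs = take i ys \<and> xs ! i < ys ! i"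
  then show "a # xs = a # ys \<or> (\<exists>i<length (a # ys). take i (a # xs) = take i (a # ys) \<and>
      (a # xs) ! i < (a # ys) ! i)"
    by (intro disjI2 exI[of _ "Suc i"]) auto
qed simp

lemma lex_le_Cons_less: "a < b \<Longrightarrow> lex_le (a # xs) (b # ys)"
  unfolding lex_le_def by (intro disjI2 exI[of _ 0]) auto

lemma lex_le_pref_fact:
  assumes "set \<pi>s \<subseteq> tcone p q wa wb" "czero \<notin> set \<pi>s" "K \<in> factorizations \<pi>s x"
  shows "lex_le K (pref_fact (tcone p q wa wb) \<pi>s x)"
  using assms
proof (induction \<pi>s arbitrary: x K)
  case Nil
  then show ?case by (simp add: factorizations_def lex_le_def)
next
  case (Cons \<pi> \<pi>s)
  let ?C = "tcone p q wa wb"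
  let ?j = "greedy_mult ?C \<pi> x"
  obtain k ks where K: "K = k # ks" "ks \<in> factorizations \<pi>s (lincomb ks \<pi>s)"
    and x: "x = cadd (lincomb ks \<pi>s) (csmul k \<pi>)"
    using Cons.prems(3) by (cases K) (auto simp: factorizations_def cadd_commute)
  have "cdvd ?C (csmul k \<pi>) x"
    unfolding cdvd_def x using lincomb_in_tcone Cons.prems(1) by auto
  moreover have "\<pi> \<in> ?C" "\<pi> \<noteq> czero" using Cons.prems(1,2) by auto
  ultimately have "k \<le> ?j" using le_greedy_mult by blast
  then consider "k < ?j" | "k = ?j" by linarith
  then show ?case
  proof cases
    case 1
    then show ?thesis unfolding K pref_fact_Cons by (rule lex_le_Cons_less)
  next
    case 2
    then have "csub x (csmul ?j \<pi>) = lincomb ks \<pi>s" using x csub_cadd by metis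
    then have "lex_le ks (pref_fact ?C \<pi>s (csub x (csmul ?j \<pi>)))"
      using Cons.IH K(2) Cons.prems(1,2) by simp
    then show ?thesis unfolding K pref_fact_Cons 2 by (rule lex_le_Cons_same)
  qed
qed

text \<open>The invariant is that no admissible prime outside the remaining factoring order divides
  the current remainder: maximality of the greedy multiplicity keeps it true.\<close>
lemma pref_fact_in_factorizations:
  assumes Aa: "down_closed_in p Aa" and Ab: "down_closed_in q Ab"
    and P: "P = {\<pi> \<in> tcone_star p q wa wb Aa Ab. is_prime_in (tcone p q wa wb) \<pi>}"
    and "set \<pi>s \<subseteq> P" "x \<in> tcone_star p q wa wb Aa Ab"
    and "\<forall>\<pi>\<in>P - set \<pi>s. \<not> cdvd (tcone p q wa wb) \<pi> x"
  shows "pref_fact (tcone p q wa wb) \<pi>s x \<in> factorizations \<pi>s x"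
  using assms(4-)
proof (induction \<pi>s arbitrary: x)
  case Nil
  have "x = czero"
  proof (rule ccontr)
    assume "x \<noteq> czero"
    then obtain \<pi> r where \<pi>: "\<pi> \<in> tcone_star p q wa wb Aa Ab" "is_prime_in (tcone p q wa wb) \<pi>"
      and r: "r \<in> tcone p q wa wb" "x = cadd r \<pi>"
      by (rule tcone_star_prime_summand[OF Aa Ab Nil.prems(2)])
    from \<pi> have "\<pi> \<in> P - set []" by (simp add: P)
    moreover from r have "cdvd (tcone p q wa wb) \<pi> x" by (auto simp: cdvd_def)
    ultimately show False using Nil.prems(3) by blast
  qed
  then show ?case by (simp add: factorizations_def czero_def)
next
  case (Cons \<pi> \<pi>s)
  let ?C = "tcone p q wa wb"
  let ?j = "greedy_mult ?C \<pi> x"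
  have \<pi>: "\<pi> \<in> ?C" "\<pi> \<noteq> czero"
    using Cons.prems(1) P by (auto simp: tcone_star_def is_prime_in_def)
  have "x \<in> ?C" using Cons.prems(2) by (simp add: tcone_star_def)
  then have "cdvd ?C (csmul ?j \<pi>) x" by (rule cdvd_greedy_mult[OF \<pi> cdvd_csmul_0])
  then obtain r where r: "r \<in> ?C" "x = cadd r (csmul ?j \<pi>)" by (auto simp: cdvd_def)
  have "cadd r (csmul ?j \<pi>) \<in> tcone_star p q wa wb Aa Ab"
    using Cons.prems(2) by (simp only: r(2)[symmetric])
  then have r_star: "r \<in> tcone_star p q wa wb Aa Ab"
    by (rule tcone_star_cadd_left[OF Aa Ab _ r(1)])
  have "\<not> cdvd ?C \<pi>' r" if \<pi>': "\<pi>' \<in> P - set \<pi>s" for \<pi>'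
  proof
    assume "cdvd ?C \<pi>' r"
    then obtain r' where r': "r' \<in> ?C" "r = cadd r' \<pi>'" by (auto simp: cdvd_def)
    show False
    proof (cases "\<pi>' = \<pi>")
      case True
      then have "cdvd ?C (csmul (Suc ?j) \<pi>) x"
        using r r' cadd_csmul_Suc by (auto simp: cdvd_def)
      then show False using le_greedy_mult[OF \<pi>] by fastforce
    next
      case False
      have "x = cadd (cadd r' (csmul ?j \<pi>)) \<pi>'" using r(2) r'(2) cadd_right_commute by simp
      then have "cdvd ?C \<pi>' x"
        unfolding cdvd_def using r' \<pi> cadd_in_tcone csmul_in_tcone by blast
      then show False using Cons.prems(3) \<pi>' False by auto
    qed
  qed
  then have "pref_fact ?C \<pi>s r \<in> factorizations \<pi>s r"
    using Cons.IH Cons.prems(1) r_star by auto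
  moreover have "cadd (csmul ?j \<pi>) r = x" using r(2) cadd_commute by simp
  moreover have "csub x (csmul ?j \<pi>) = r" using r(2) by (metis csub_cadd)
  ultimately show ?case unfolding factorizations_def pref_fact_Cons by simp
qed

theorem theorem11p8:
  fixes p q :: nat and wa wb :: "nat \<Rightarrow> nat"
    and Aa Ab :: "(nat \<Rightarrow> nat) set" and \<pi>s :: "cvec list" and x :: cvec
  assumes "down_closed_in p Aa" and "down_closed_in q Ab"
    and "distinct \<pi>s"
    and "set \<pi>s = {\<pi> \<in> tcone_star p q wa wb Aa Ab. is_prime_in (tcone p q wa wb) \<pi>}"
    and "x \<in> tcone_star p q wa wb Aa Ab"
  shows "pref_fact (tcone p q wa wb) \<pi>s x \<in> factorizations \<pi>s x \<and>
         (\<forall>K' \<in> factorizations \<pi>s x. lex_le K' (pref_fact (tcone p q wa wb) \<pi>s x))"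
proof
  show "pref_fact (tcone p q wa wb) \<pi>s x \<in> factorizations \<pi>s x"
    using pref_fact_in_factorizations[OF assms(1,2) assms(4)] assms(4,5) by simp
  have "set \<pi>s \<subseteq> tcone p q wa wb" "czero \<notin> set \<pi>s"
    using assms(4) by (auto simp: tcone_star_def is_prime_in_def)
  then show "\<forall>K' \<in> factorizations \<pi>s x. lex_le K' (pref_fact (tcone p q wa wb) \<pi>s x)"
    using lex_le_pref_fact by blast
qed

end
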